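(* For any constant $\epsilon>0$, any randomized online algorithm for online bipartite matching in the random edge arrival model that does not know the number of edges to arrive has competitive ratio at most $\frac23+\epsilon$.
   Context: Online bipartite matching in the random edge arrival model: the edges of a fixed bipartite graph arrive one at a time in a uniformly random order; upon each arrival the algorithm irrevocably decides whether to add the edge to its matching, which must remain a matching. Here the algorithm is not told the total number of edges. The competitive ratio is the infimum over graphs of (expected size of the output matching over the order and the algorithm's coins)$/|\textsc{OPT}|$, with $\textsc{OPT}$ a maximum matching. *)

theory Defs
  imports "HOL-Probability.Probability" "HOL-Combinatorics.Multiset_Permutations"
begin

text \<open>Bipartite graphs: an edge (u,v) joins left vertex u to right vertex v;
  a graph is a finite set of such edges.\<close>
type_synonym edge = "nat \<times> nat"

definition is_matching :: "edge set \<Rightarrow> bool" where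
  "is_matching M \<longleftrightarrow> (\<forall>e\<in>M. \<forall>f\<in>M. e \<noteq> f \<longrightarrow> fst e \<noteq> fst f \<and> snd e \<noteq> snd f)"

definition opt :: "edge set \<Rightarrow> nat" where
  "opt E = Max {card M | M. M \<subseteq> E \<and> is_matching M}"

text \<open>A randomized online algorithm (behavioural form): given the history of arrived
  edges together with its own past decisions, and the newly arrived edge, it outputs
  the probability of accepting the new edge. It is not told the number of edges.\<close>
type_synonym online_alg = "(edge \<times> bool) list \<Rightarrow> edge \<Rightarrow> real"

definition accepted :: "(edge \<times> bool) list \<Rightarrow> edge set" where
  "accepted h = {e. (e, True) \<in> set h}"

definition can_add :: "(edge \<times> bool) list \<Rightarrow> edge \<Rightarrow> bool" where
  "can_add h e \<longleftrightarrow> (\<forall>f\<in>accepted h. fst f \<noteq> fst e \<and> snd f \<noteq> snd e)"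

fun run :: "online_alg \<Rightarrow> (edge \<times> bool) list \<Rightarrow> edge list \<Rightarrow> (edge \<times> bool) list pmf" where
  "run A h [] = return_pmf h"
| "run A h (e # es) =
     (if can_add h e
      then bind_pmf (bernoulli_pmf (A h e)) (\<lambda>b. run A (h @ [(e, b)]) es)
      else run A (h @ [(e, False)]) es)"

definition expected_alg :: "online_alg \<Rightarrow> edge set \<Rightarrow> real" where
  "expected_alg A E =
     measure_pmf.expectation
       (bind_pmf (pmf_of_set (permutations_of_set E)) (\<lambda>xs. run A [] xs))
       (\<lambda>h. real (card (accepted h)))"

definition competitive_ratio :: "online_alg \<Rightarrow> real" where
  "competitive_ratio A =
     (INF E \<in> {E. finite E \<and> E \<noteq> {}}. expected_alg A E / real (opt E))"

end

theory Submission
  imports Defs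
begin

text \<open>
  Let hard_graph n be the complete bipartite graph core n on {0..<n} \<times> {0..<n} with a pendant
  edge attached to each of its 2n vertices, so that its maximum matching has 2n edges, while
  a matching using j core edges has at most 2n - j edges. The algorithm is not told the number of edges, so on the
  first m arrivals it behaves as on a uniformly random m-edge subgraph; choosing m binomially,
  that subgraph is the random subgraph S in which every edge is kept with probability p.
  An algorithm of ratio c matches about c \<cdot> opt (S \<inter> core) \<ge> c (n - 1/p) edges of S, all but
  at most about 2np of them core edges, and these can never be undone. Its final matching thus
  has expected size at most 2n - c (n - 1/p) + 2np, while it must be at least 2cn; letting
  n \<rightarrow> \<infinity> and p \<rightarrow> 0 gives c \<le> 2/3.
\<close>

section \<open>Runs of an online algorithm\<close>

lemma finite_set_pmf_run: "finite (set_pmf (run A h xs))"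
  by (induction xs arbitrary: h) auto

lemma run_append: "run A h (xs @ ys) = bind_pmf (run A h xs) (\<lambda>h'. run A h' ys)"
  by (induction xs arbitrary: h) (auto simp: bind_return_pmf bind_assoc_pmf)

lemma run_extends_history:
  "h' \<in> set_pmf (run A h xs) \<Longrightarrow> \<exists>zs. h' = h @ zs \<and> map fst zs = xs"
proof (induction xs arbitrary: h)
  case (Cons e xs)
  then obtain b where "h' \<in> set_pmf (run A (h @ [(e, b)]) xs)"
    by (auto split: if_splits)
  with Cons.IH obtain zs where "h' = (h @ [(e, b)]) @ zs" "map fst zs = xs"
    by blast
  then show ?case
    by (intro exI[of _ "(e, b) # zs"]) simp
qed simp

lemma accepted_append: "accepted (h @ h') = accepted h \<union> accepted h'"
  by (auto simp: accepted_def)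

lemma accepted_subset: "accepted h \<subseteq> fst ` set h"
  by (force simp: accepted_def)

lemma finite_accepted: "finite (accepted h)"
  using accepted_subset by (rule finite_subset) simp

lemma is_matching_accepted_snoc:
  assumes "is_matching (accepted h)" and "b \<longrightarrow> can_add h e"
  shows "is_matching (accepted (h @ [(e, b)]))"
proof (cases b)
  case True
  then have "accepted (h @ [(e, b)]) = insert e (accepted h)"
    by (auto simp: accepted_def)
  with True assms show ?thesis
    unfolding is_matching_def can_add_def by auto
next
  case False
  then have "accepted (h @ [(e, b)]) = accepted h"
    by (auto simp: accepted_def)
  with assms show ?thesis by simp
qed

lemma is_matching_accepted_run:
  "is_matching (accepted h) \<Longrightarrow> h' \<in> set_pmf (run A h xs) \<Longrightarrow> is_matching (accepted h')"
proof (induction xs arbitrary: h)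
  case (Cons e xs)
  then obtain b where "b \<longrightarrow> can_add h e" "h' \<in> set_pmf (run A (h @ [(e, b)]) xs)"
    by (auto split: if_splits)
  with Cons.IH Cons.prems(1) show ?case
    by (blast intro: is_matching_accepted_snoc)
qed simp

lemma expectation_bind_pmf_finite:
  fixes f :: "'b \<Rightarrow> real"
  assumes "finite (set_pmf M)" and "\<And>x. x \<in> set_pmf M \<Longrightarrow> finite (set_pmf (N x))"
  shows "measure_pmf.expectation (bind_pmf M N) f =
         measure_pmf.expectation M (\<lambda>x. measure_pmf.expectation (N x) f)"
  using assms by (simp add: pmf_expectation_bind[OF assms order.refl] integral_measure_pmf_real
      mult.commute)

lemma expectation_mono_finite_pmf:
  fixes f g :: "'a \<Rightarrow> real"
  assumes "finite (set_pmf M)" and "\<And>x. x \<in> set_pmf M \<Longrightarrow> f x \<le> g x"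
  shows "measure_pmf.expectation M f \<le> measure_pmf.expectation M g"
  using assms by (intro integral_mono_AE integrable_measure_pmf_finite AE_pmfI)

section \<open>Random subsets\<close>

definition subset_avg :: "real \<Rightarrow> 'a set \<Rightarrow> ('a set \<Rightarrow> real) \<Rightarrow> real" where
  "subset_avg p A f = (\<Sum>S\<in>Pow A. p ^ card S * (1 - p) ^ card (A - S) * f S)"

lemma subset_avg_empty [simp]: "subset_avg p {} f = f {}"
  by (simp add: subset_avg_def)

lemma subset_avg_singleton: "subset_avg p {a} f = (1 - p) * f {} + p * f {a}"
proof -
  have "Pow {a} = {{}, {a}}" by auto
  then show ?thesis by (simp add: subset_avg_def)
qed

lemma subset_avg_add: "subset_avg p A (\<lambda>S. f S + g S) = subset_avg p A f + subset_avg p A g"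
  by (simp add: subset_avg_def algebra_simps sum.distrib)

lemma subset_avg_diff: "subset_avg p A (\<lambda>S. f S - g S) = subset_avg p A f - subset_avg p A g"
  by (simp add: subset_avg_def algebra_simps sum_subtractf)

lemma subset_avg_cmult: "subset_avg p A (\<lambda>S. c * f S) = c * subset_avg p A f"
  by (simp add: subset_avg_def algebra_simps sum_distrib_left)

lemma subset_avg_sum: "subset_avg p A (\<lambda>S. \<Sum>i\<in>I. f i S) = (\<Sum>i\<in>I. subset_avg p A (f i))"
  by (simp add: subset_avg_def sum_distrib_left sum.swap[of _ I])

lemma subset_avg_mono:
  assumes "0 \<le> p" "p \<le> 1" and "\<And>S. S \<subseteq> A \<Longrightarrow> f S \<le> g S"
  shows "subset_avg p A f \<le> subset_avg p A g"
  unfolding subset_avg_def using assms by (intro sum_mono mult_left_mono) auto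

lemma subset_avg_Un:
  assumes "finite A" "finite B" "A \<inter> B = {}"
  shows "subset_avg p (A \<union> B) f = subset_avg p A (\<lambda>X. subset_avg p B (\<lambda>Y. f (X \<union> Y)))"
proof -
  have bij: "bij_betw (\<lambda>(X, Y). X \<union> Y) (Pow A \<times> Pow B) (Pow (A \<union> B))"
    by (rule bij_betw_byWitness[where f' = "\<lambda>S. (S \<inter> A, S \<inter> B)"]) (use assms(3) in auto)
  have weight: "p ^ card (X \<union> Y) * (1 - p) ^ card (A \<union> B - (X \<union> Y))
      = (p ^ card X * (1 - p) ^ card (A - X)) * (p ^ card Y * (1 - p) ^ card (B - Y))"
    if "X \<subseteq> A" "Y \<subseteq> B" for X Y
  proof -
    have "card (X \<union> Y) = card X + card Y"
      using that assms by (intro card_Un_disjoint) (auto intro: finite_subset)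
    moreover have "card (A \<union> B - (X \<union> Y)) = card (A - X) + card (B - Y)"
      using that assms by (subst card_Un_disjoint[symmetric]) (auto intro: arg_cong[where f = card])
    ultimately show ?thesis by (simp add: power_add)
  qed
  have "subset_avg p (A \<union> B) f = (\<Sum>(X, Y)\<in>Pow A \<times> Pow B.
      p ^ card (X \<union> Y) * (1 - p) ^ card (A \<union> B - (X \<union> Y)) * f (X \<union> Y))"
    unfolding subset_avg_def
    by (subst sum.reindex_bij_betw[OF bij, symmetric]) (simp add: case_prod_unfold)
  also have "\<dots> = subset_avg p A (\<lambda>X. subset_avg p B (\<lambda>Y. f (X \<union> Y)))"
    unfolding subset_avg_def sum.cartesian_product[symmetric] sum_distrib_left
    by (intro sum.cong refl) (simp add: weight mult.assoc)
  finally show ?thesis .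
qed

lemma subset_avg_const: "finite A \<Longrightarrow> subset_avg p A (\<lambda>_. c) = c"
proof (induction A rule: finite_induct)
  case (insert a A)
  then have "subset_avg p ({a} \<union> A) (\<lambda>_. c) = subset_avg p {a} (\<lambda>_. subset_avg p A (\<lambda>_. c))"
    by (intro subset_avg_Un) auto
  with insert show ?case by (simp add: subset_avg_singleton algebra_simps)
qed simp

lemma subset_avg_restrict:
  assumes "finite A" "B \<subseteq> A"
  shows "subset_avg p A (\<lambda>S. f (S \<inter> B)) = subset_avg p B f"
proof -
  have "finite B" using assms finite_subset by auto
  then have "subset_avg p (B \<union> (A - B)) (\<lambda>S. f (S \<inter> B))
      = subset_avg p B (\<lambda>X. subset_avg p (A - B) (\<lambda>Y. f ((X \<union> Y) \<inter> B)))"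
    using assms by (intro subset_avg_Un) auto
  also have "\<dots> = subset_avg p B (\<lambda>X. subset_avg p (A - B) (\<lambda>_. f X))"
    unfolding subset_avg_def
    by (intro sum.cong refl arg_cong2[where f = "(*)"] arg_cong[where f = f]) auto
  also have "\<dots> = subset_avg p B f"
    using assms by (simp add: subset_avg_const)
  finally show ?thesis
    using assms by (simp add: Un_absorb1)
qed

lemma subset_avg_indicator:
  assumes "finite A" "a \<in> A"
  shows "subset_avg p A (\<lambda>S. if a \<in> S then 1 else 0) = p"
  using subset_avg_restrict[OF assms(1), of "{a}" p "\<lambda>T. if a \<in> T then 1 else 0"] assms
  by (simp add: subset_avg_singleton)

lemma subset_avg_if_empty:
  assumes "finite A"
  shows "subset_avg p A (\<lambda>S. if S = {} then a else b) = b + (a - b) * (1 - p) ^ card A"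
proof -
  have indicator: "subset_avg p A (\<lambda>S. if S = {} then 1 else 0) = (1 - p) ^ card A"
    unfolding subset_avg_def using assms by (simp add: if_distrib sum.delta cong: if_cong)
  have "subset_avg p A (\<lambda>S. if S = {} then a else b)
      = subset_avg p A (\<lambda>S. b + (a - b) * (if S = {} then 1 else 0))"
    by (rule arg_cong[where f = "subset_avg p A"]) auto
  also have "\<dots> = b + (a - b) * (1 - p) ^ card A"
    using assms by (simp add: subset_avg_add subset_avg_const subset_avg_cmult indicator)
  finally show ?thesis .
qed

lemma subset_avg_by_card:
  assumes "finite A"
  shows "subset_avg p A f =
    (\<Sum>m\<le>card A. p ^ m * (1 - p) ^ (card A - m) * (\<Sum>S | S \<subseteq> A \<and> card S = m. f S))"
proof -
  have "Pow A = (\<Union>m\<le>card A. {S. S \<subseteq> A \<and> card S = m})"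
    using assms by (auto intro: card_mono)
  then have "subset_avg p A f = (\<Sum>m\<le>card A. \<Sum>S | S \<subseteq> A \<and> card S = m.
      p ^ card S * (1 - p) ^ card (A - S) * f S)"
    unfolding subset_avg_def using assms by (simp, subst sum.UNION_disjoint) auto
  also have "\<dots> = (\<Sum>m\<le>card A. p ^ m * (1 - p) ^ (card A - m) * (\<Sum>S | S \<subseteq> A \<and> card S = m. f S))"
    unfolding sum_distrib_left
    by (intro sum.cong refl) (auto simp: card_Diff_subset finite_subset[OF _ assms])
  finally show ?thesis .
qed

section \<open>Maximum matchings of random subgraphs\<close>

lemma finite_matching_cards: "finite E \<Longrightarrow> finite {card M | M. M \<subseteq> E \<and> is_matching M}"
proof -
  have "{card M | M. M \<subseteq> E \<and> is_matching M} \<subseteq> card ` Pow E" by auto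
  then show "finite E \<Longrightarrow> ?thesis" by (rule finite_subset) simp
qed

lemma card_le_opt: "finite E \<Longrightarrow> M \<subseteq> E \<Longrightarrow> is_matching M \<Longrightarrow> card M \<le> opt E"
  unfolding opt_def by (rule Max_ge[OF finite_matching_cards]) auto

lemma obtain_maximum_matching:
  assumes "finite E"
  obtains M where "M \<subseteq> E" "is_matching M" "card M = opt E"
proof -
  have "is_matching {}" by (simp add: is_matching_def)
  then have "opt E \<in> {card M | M. M \<subseteq> E \<and> is_matching M}"
    unfolding opt_def using assms by (intro Max_in finite_matching_cards) auto
  then show ?thesis using that by auto
qed

lemma opt_mono:
  assumes "finite E" "E' \<subseteq> E"
  shows "opt E' \<le> opt E"
proof -
  obtain M where "M \<subseteq> E'" "is_matching M" "card M = opt E'"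
    using obtain_maximum_matching[OF finite_subset[OF assms(2,1)]] .
  with assms show ?thesis
    using card_le_opt[of E M] by auto
qed

lemma opt_empty [simp]: "opt {} = 0"
proof -
  obtain M where "M \<subseteq> {}" "is_matching M" "card M = opt {}"
    using obtain_maximum_matching[OF finite.emptyI] .
  then show ?thesis by simp
qed

lemma one_le_opt:
  assumes "finite E" "e \<in> E"
  shows "1 \<le> opt E"
  using card_le_opt[OF assms(1), of "{e}"] assms(2) by (simp add: is_matching_def)

lemma opt_less_opt_insert:
  assumes "finite E" "insert a F \<subseteq> E"
    and disj: "\<And>e. e \<in> F \<Longrightarrow> fst e \<noteq> fst a \<and> snd e \<noteq> snd a"
  shows "opt F < opt E"
proof -
  have "F \<subseteq> E" using assms(2) by simp
  then have "finite F" using assms(1) by (rule finite_subset)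
  then obtain M where M: "M \<subseteq> F" "is_matching M" "card M = opt F"
    by (rule obtain_maximum_matching)
  have "is_matching (insert a M)"
    using M(2) disj M(1) unfolding is_matching_def by auto
  moreover have "a \<notin> M"
    using M(1) disj by blast
  moreover have "finite M"
    using M(1) \<open>finite F\<close> by (rule finite_subset)
  ultimately have "card M + 1 \<le> opt E"
    using card_le_opt[OF assms(1), of "insert a M"] M(1) assms(2) by auto
  with M show ?thesis by simp
qed

text \<open>Processing the rows of a p-random subgraph of L \<times> R greedily, the i-th row still
  finds a free column with probability 1 - (1 - p) ^ (card R - i).\<close>
definition greedy_bound :: "real \<Rightarrow> nat \<Rightarrow> nat \<Rightarrow> real" where
  "greedy_bound p k r = (\<Sum>i<k. 1 - (1 - p) ^ (r - i))"

lemma greedy_bound_Suc: "greedy_bound p (Suc k) r = (1 - (1 - p) ^ r) + greedy_bound p k (r - 1)"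
proof -
  have "r - Suc i = r - 1 - i" for i by simp
  then show ?thesis
    unfolding greedy_bound_def by (subst sum.lessThan_Suc_shift) simp
qed

lemma greedy_bound_pred_le:
  assumes "0 \<le> p" "p \<le> 1"
  shows "greedy_bound p k (r - 1) \<le> greedy_bound p k r"
  unfolding greedy_bound_def using assms by (intro sum_mono) (simp add: power_decreasing)

lemma greedy_bound_ge:
  assumes "0 < p" "p \<le> 1"
  shows "real n - 1 / p \<le> greedy_bound p n n"
proof -
  define q where "q = 1 - p"
  have q: "0 \<le> q" "q < 1" using assms by (auto simp: q_def)
  have "(\<Sum>i<n. q ^ (n - i)) = (\<Sum>i<n. q ^ Suc i)"
    by (subst sum.nat_diff_reindex[symmetric]) (simp add: Suc_diff_Suc)
  also have "\<dots> = q * (1 - q ^ n) / (1 - q)"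
    using q by (simp add: sum_distrib_left[symmetric] sum_gp_strict)
  also have "\<dots> \<le> 1 / p"
  proof -
    have "q * (1 - q ^ n) \<le> 1" using q by (simp add: mult_le_one power_le_one)
    then show ?thesis using assms by (simp add: q_def divide_right_mono)
  qed
  finally show ?thesis
    unfolding greedy_bound_def q_def by (simp add: sum_subtractf)
qed

lemma subset_avg_opt_add_row:
  assumes "0 \<le> p" "p \<le> 1" "finite L" "finite R" "l \<notin> L" "(l, r) \<in> X" "X \<subseteq> {l} \<times> R"
  shows "1 + subset_avg p (L \<times> (R - {r})) (\<lambda>S. real (opt S))
    \<le> subset_avg p (L \<times> R) (\<lambda>Y. real (opt (X \<union> Y)))"
proof -
  have less: "opt (Y \<inter> (L \<times> (R - {r}))) < opt (X \<union> Y)" if Y: "Y \<subseteq> L \<times> R" for Y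
  proof (rule opt_less_opt_insert[where a = "(l, r)"])
    have "X \<union> Y \<subseteq> L \<times> R \<union> {l} \<times> R"
      using assms(7) Y by blast
    then show "finite (X \<union> Y)"
      by (rule finite_subset) (simp add: assms(3,4))
  qed (use assms in auto)
  have "subset_avg p (L \<times> R) (\<lambda>Y. real (opt (Y \<inter> (L \<times> (R - {r})))))
      = subset_avg p (L \<times> (R - {r})) (\<lambda>S. real (opt S))"
    by (rule subset_avg_restrict) (use assms in auto)
  then have "1 + subset_avg p (L \<times> (R - {r})) (\<lambda>S. real (opt S))
      = subset_avg p (L \<times> R) (\<lambda>Y. 1 + real (opt (Y \<inter> (L \<times> (R - {r})))))"
    using assms by (simp add: subset_avg_add subset_avg_const)
  also have "\<dots> \<le> subset_avg p (L \<times> R) (\<lambda>Y. real (opt (X \<union> Y)))"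
  proof (intro subset_avg_mono[OF assms(1,2)])
    fix Y assume "Y \<subseteq> L \<times> R"
    then show "1 + real (opt (Y \<inter> (L \<times> (R - {r})))) \<le> real (opt (X \<union> Y))"
      using less[of Y] by linarith
  qed
  finally show ?thesis .
qed

lemma greedy_bound_le_subset_avg_opt:
  assumes "0 \<le> p" "p \<le> 1" "finite L" "finite R"
  shows "greedy_bound p (card L) (card R) \<le> subset_avg p (L \<times> R) (\<lambda>S. real (opt S))"
  using assms(3,4)
proof (induction L arbitrary: R rule: finite_induct)
  case empty
  then show ?case by (simp add: greedy_bound_def)
next
  case (insert l L)
  define q where "q = (1 - p) ^ card R"
  define a where "a = greedy_bound p (card L) (card R)"
  define b where "b = 1 + greedy_bound p (card L) (card R - 1)"
  have row: "(if X = {} then a else b) \<le> subset_avg p (L \<times> R) (\<lambda>Y. real (opt (X \<union> Y)))"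
    if X: "X \<subseteq> {l} \<times> R" for X
  proof (cases "X = {}")
    case True
    then show ?thesis using insert.IH[OF insert.prems] by (simp add: a_def)
  next
    case False
    then obtain r where r: "(l, r) \<in> X" using X by auto
    then have "card (R - {r}) = card R - 1" using X insert.prems by auto
    then have "b \<le> 1 + subset_avg p (L \<times> (R - {r})) (\<lambda>S. real (opt S))"
      using insert.IH[of "R - {r}"] insert.prems by (simp add: b_def)
    also have "\<dots> \<le> subset_avg p (L \<times> R) (\<lambda>Y. real (opt (X \<union> Y)))"
      by (rule subset_avg_opt_add_row) (use assms insert.hyps insert.prems r X in auto)
    finally show ?thesis using False by simp
  qed
  have "greedy_bound p (card (insert l L)) (card R) \<le> b + (a - b) * q"
  proof -
    have "q * greedy_bound p (card L) (card R - 1) \<le> q * a"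
      using greedy_bound_pred_le[OF assms(1,2)] assms by (intro mult_left_mono) (auto simp: a_def q_def)
    then show ?thesis
      using insert.hyps by (simp add: greedy_bound_Suc a_def b_def q_def algebra_simps)
  qed
  also have "b + (a - b) * q = subset_avg p ({l} \<times> R) (\<lambda>X. if X = {} then a else b)"
    using insert.prems by (simp add: subset_avg_if_empty q_def card_cartesian_product)
  also have "\<dots> \<le> subset_avg p ({l} \<times> R) (\<lambda>X. subset_avg p (L \<times> R) (\<lambda>Y. real (opt (X \<union> Y))))"
    using row by (rule subset_avg_mono[OF assms(1,2)])
  also have "\<dots> = subset_avg p ({l} \<times> R \<union> L \<times> R) (\<lambda>S. real (opt S))"
    by (rule subset_avg_Un[symmetric]) (use insert.hyps insert.prems in auto)
  also have "{l} \<times> R \<union> L \<times> R = insert l L \<times> R"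
    by auto
  finally show ?case .
qed

section \<open>Random arrival orders and their prefixes\<close>

lemma bij_betw_append_permutations:
  assumes "S \<subseteq> G" "finite G" "card S = m"
  shows "bij_betw (\<lambda>(ys, zs). ys @ zs) (permutations_of_set S \<times> permutations_of_set (G - S))
    {xs \<in> permutations_of_set G. set (take m xs) = S}"
proof (rule bij_betw_byWitness[where f' = "\<lambda>xs. (take m xs, drop m xs)"])
  have len: "length ys = m" if "ys \<in> permutations_of_set S" for ys
    using assms that by (metis length_finite_permutations_of_set)
  show "\<forall>a\<in>permutations_of_set S \<times> permutations_of_set (G - S).
      (\<lambda>xs. (take m xs, drop m xs)) (case a of (ys, zs) \<Rightarrow> ys @ zs) = a"
    using len by auto
  show "\<forall>xs\<in>{xs \<in> permutations_of_set G. set (take m xs) = S}.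
      (case (take m xs, drop m xs) of (ys, zs) \<Rightarrow> ys @ zs) = xs"
    by simp
  show "(\<lambda>(ys, zs). ys @ zs) ` (permutations_of_set S \<times> permutations_of_set (G - S))
      \<subseteq> {xs \<in> permutations_of_set G. set (take m xs) = S}"
    using assms(1) len by (auto simp: permutations_of_set_def)
  show "(\<lambda>xs. (take m xs, drop m xs)) ` {xs \<in> permutations_of_set G. set (take m xs) = S}
      \<subseteq> permutations_of_set S \<times> permutations_of_set (G - S)"
  proof (rule image_subsetI)
    fix xs assume "xs \<in> {xs \<in> permutations_of_set G. set (take m xs) = S}"
    then have xs: "xs \<in> permutations_of_set G" and S: "S = set (take m xs)"
      by auto
    have "set (take m xs) \<inter> set (drop m xs) = {}"
      using permutations_of_setD(2)[OF xs] by (simp add: set_take_disj_set_drop_if_distinct)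
    moreover have "set (take m xs) \<union> set (drop m xs) = G"
      using permutations_of_setD(1)[OF xs] by (metis append_take_drop_id set_append)
    ultimately show "(take m xs, drop m xs) \<in> permutations_of_set S \<times> permutations_of_set (G - S)"
      using permutations_of_setD(2)[OF xs] S by auto
  qed
qed

lemma sum_permutations_of_set_take:
  assumes "finite G" "m \<le> card G"
  shows "(\<Sum>xs\<in>permutations_of_set G. F (take m xs)) =
    fact (card G - m) * (\<Sum>S | S \<subseteq> G \<and> card S = m. \<Sum>ys\<in>permutations_of_set S. F ys)"
proof -
  let ?SS = "{S. S \<subseteq> G \<and> card S = m}"
  have "finite ?SS"
    using assms(1) by (simp add: finite_subset[of _ "Pow G"] subset_eq)
  moreover have "(\<lambda>xs. set (take m xs)) ` permutations_of_set G \<subseteq> ?SS"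
  proof (rule image_subsetI)
    fix xs assume xs: "xs \<in> permutations_of_set G"
    then have "length xs = card G"
      by (rule length_finite_permutations_of_set)
    then show "set (take m xs) \<in> ?SS"
      using assms(2) permutations_of_setD[OF xs] by (auto simp: distinct_card dest: in_set_takeD)
  qed
  ultimately have "(\<Sum>xs\<in>permutations_of_set G. F (take m xs)) =
      (\<Sum>S\<in>?SS. \<Sum>xs | xs \<in> permutations_of_set G \<and> set (take m xs) = S. F (take m xs))"
    by (intro sum.group[symmetric]) auto
  also have "\<dots> = (\<Sum>S\<in>?SS. \<Sum>(ys, zs)\<in>permutations_of_set S \<times> permutations_of_set (G - S). F ys)"
  proof (rule sum.cong[OF refl])
    fix S assume S: "S \<in> ?SS"
    then have "length ys = m" if "ys \<in> permutations_of_set S" for ys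
      using assms(1) that by (metis (mono_tags) length_finite_permutations_of_set mem_Collect_eq)
    with S assms(1) show "(\<Sum>xs | xs \<in> permutations_of_set G \<and> set (take m xs) = S. F (take m xs)) =
        (\<Sum>(ys, zs)\<in>permutations_of_set S \<times> permutations_of_set (G - S). F ys)"
      by (subst sum.reindex_bij_betw[OF bij_betw_append_permutations, symmetric])
        (auto intro!: sum.cong simp: case_prod_unfold)
  qed
  also have "\<dots> = (\<Sum>S\<in>?SS. fact (card G - m) * (\<Sum>ys\<in>permutations_of_set S. F ys))"
  proof (rule sum.cong[OF refl])
    fix S assume "S \<in> ?SS"
    then have "S \<subseteq> G" "card S = m" by auto
    then have "card (G - S) = card G - m"
      using assms(1) by (simp add: card_Diff_subset finite_subset)
    with assms(1) show "(\<Sum>(ys, zs)\<in>permutations_of_set S \<times> permutations_of_set (G - S). F ys)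
        = fact (card G - m) * (\<Sum>ys\<in>permutations_of_set S. F ys)"
      by (simp add: sum.cartesian_product[symmetric] sum_distrib_left mult.commute)
  qed
  finally show ?thesis by (simp add: sum_distrib_left)
qed

definition expected_run_size :: "online_alg \<Rightarrow> edge list \<Rightarrow> real" where
  "expected_run_size A xs = measure_pmf.expectation (run A [] xs) (\<lambda>h. real (card (accepted h)))"

lemma expected_alg_eq_sum:
  assumes "finite G"
  shows "expected_alg A G = (\<Sum>xs\<in>permutations_of_set G. expected_run_size A xs) / fact (card G)"
  unfolding expected_alg_def expected_run_size_def using assms
  by (subst pmf_expectation_bind_pmf_of_set)
    (auto simp: finite_set_pmf_run sum_distrib_left divide_inverse_commute)

lemma card_accepted_run_bound:
  assumes bound: "\<And>M. M \<subseteq> G \<Longrightarrow> is_matching M \<Longrightarrow> card M + card (M - P) \<le> k"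
    and "set ys \<union> set zs \<subseteq> G"
    and h': "h' \<in> set_pmf (run A [] ys)" and h: "h \<in> set_pmf (run A h' zs)"
  shows "card (accepted h) + card (accepted h') \<le> k + card (set ys \<inter> P)"
proof -
  obtain zs' where "h = h' @ zs'" "map fst zs' = zs"
    using run_extends_history[OF h] by blast
  then have acc: "accepted h = accepted h' \<union> accepted zs'"
    and "accepted zs' \<subseteq> set zs"
    using accepted_subset[of zs'] by (auto simp: accepted_append)
  moreover have acc': "accepted h' \<subseteq> set ys"
    using run_extends_history[OF h'] accepted_subset[of h'] by auto
  ultimately have "accepted h \<subseteq> G"
    using assms(2) by blast
  moreover have "is_matching (accepted [])"
    by (simp add: accepted_def is_matching_def)
  then have "is_matching (accepted h')"
    using h' by (rule is_matching_accepted_run)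
  then have "is_matching (accepted h)"
    using h by (rule is_matching_accepted_run)
  ultimately have "card (accepted h) + card (accepted h - P) \<le> k"
    by (rule bound)
  moreover have "card (accepted h' - P) \<le> card (accepted h - P)"
    using acc by (intro card_mono) (auto simp: finite_accepted)
  moreover have "card (accepted h' \<inter> P) \<le> card (set ys \<inter> P)"
    using acc' by (intro card_mono) auto
  ultimately show ?thesis
    using card_Int_Diff[OF finite_accepted, of h' P] by linarith
qed

text \<open>The history after the first m arrivals is that of a run on these m edges alone,
  since the algorithm cannot tell whether more edges will follow.\<close>
lemma expected_run_size_le:
  assumes bound: "\<And>M. M \<subseteq> G \<Longrightarrow> is_matching M \<Longrightarrow> card M + card (M - P) \<le> k"
    and "set xs = G"
  shows "expected_run_size A xs
    \<le> k - expected_run_size A (take m xs) + card (set (take m xs) \<inter> P)"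
proof -
  let ?size = "\<lambda>h. real (card (accepted h))"
  let ?c = "real (card (set (take m xs) \<inter> P))"
  have G: "set (take m xs) \<union> set (drop m xs) \<subseteq> G"
    using assms(2) by (metis append_take_drop_id set_append order.refl)
  have pointwise: "?size h \<le> k - ?size h' + ?c"
    if "h' \<in> set_pmf (run A [] (take m xs))" "h \<in> set_pmf (run A h' (drop m xs))" for h h'
  proof -
    have "card (accepted h) + card (accepted h') \<le> k + card (set (take m xs) \<inter> P)"
      by (rule card_accepted_run_bound[of G P k, OF bound G that])
    then show ?thesis by linarith
  qed
  have "expected_run_size A xs = measure_pmf.expectation (run A [] (take m xs))
      (\<lambda>h'. measure_pmf.expectation (run A h' (drop m xs)) ?size)"
    unfolding expected_run_size_def
    by (subst append_take_drop_id[symmetric, of xs m], subst run_append)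
      (rule expectation_bind_pmf_finite; simp add: finite_set_pmf_run)
  also have "\<dots> \<le> measure_pmf.expectation (run A [] (take m xs)) (\<lambda>h'. k - ?size h' + ?c)"
  proof (rule expectation_mono_finite_pmf[OF finite_set_pmf_run])
    fix h' assume h': "h' \<in> set_pmf (run A [] (take m xs))"
    have "measure_pmf.expectation (run A h' (drop m xs)) ?size
        \<le> measure_pmf.expectation (run A h' (drop m xs)) (\<lambda>_. k - ?size h' + ?c)"
      by (rule expectation_mono_finite_pmf[OF finite_set_pmf_run]) (rule pointwise[OF h'])
    then show "measure_pmf.expectation (run A h' (drop m xs)) ?size \<le> k - ?size h' + ?c"
      by simp
  qed
  also have "\<dots> = k - expected_run_size A (take m xs) + ?c"
    unfolding expected_run_size_def using finite_set_pmf_run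
    by (simp add: integrable_measure_pmf_finite)
  finally show ?thesis .
qed

lemma sum_permutations_expected_run_size:
  assumes "finite S"
  shows "(\<Sum>ys\<in>permutations_of_set S. expected_run_size A ys - real (card (set ys \<inter> P)))
    = fact (card S) * (expected_alg A S - real (card (S \<inter> P)))"
proof -
  have "(\<Sum>ys\<in>permutations_of_set S. real (card (set ys \<inter> P)))
      = (\<Sum>ys\<in>permutations_of_set S. real (card (S \<inter> P)))"
    by (intro sum.cong refl) (simp add: permutations_of_setD)
  then show ?thesis
    using assms by (simp add: expected_alg_eq_sum sum_subtractf algebra_simps)
qed

lemma sum_expected_run_size_le:
  assumes "finite G" "m \<le> card G"
    and bound: "\<And>M. M \<subseteq> G \<Longrightarrow> is_matching M \<Longrightarrow> card M + card (M - P) \<le> k"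
  shows "(\<Sum>xs\<in>permutations_of_set G. expected_run_size A xs) \<le> fact (card G) * k -
    fact (card G - m) * fact m *
      (\<Sum>S | S \<subseteq> G \<and> card S = m. expected_alg A S - real (card (S \<inter> P)))"
proof -
  define D where "D ys = expected_run_size A ys - real (card (set ys \<inter> P))" for ys
  have "(\<Sum>ys\<in>permutations_of_set S. D ys) = fact m * (expected_alg A S - real (card (S \<inter> P)))"
    if "S \<subseteq> G" "card S = m" for S
    using that assms(1) sum_permutations_expected_run_size[of S A P]
    by (simp add: D_def finite_subset)
  then have sum_D: "(\<Sum>xs\<in>permutations_of_set G. D (take m xs)) = fact (card G - m) * fact m *
      (\<Sum>S | S \<subseteq> G \<and> card S = m. expected_alg A S - real (card (S \<inter> P)))"
    using sum_permutations_of_set_take[OF assms(1,2), of D]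
    by (simp add: sum_distrib_left mult.assoc)
  have "(\<Sum>xs\<in>permutations_of_set G. expected_run_size A xs)
      \<le> (\<Sum>xs\<in>permutations_of_set G. k - D (take m xs))"
  proof (rule sum_mono)
    fix xs assume xs: "xs \<in> permutations_of_set G"
    show "expected_run_size A xs \<le> k - D (take m xs)"
      using expected_run_size_le[OF bound permutations_of_setD(1)[OF xs], of A m]
      unfolding D_def by linarith
  qed
  then show ?thesis
    using assms(1) sum_D by (simp add: sum_subtractf)
qed

lemma expected_alg_le_prefix_avg:
  assumes "finite G" "m \<le> card G"
    and bound: "\<And>M. M \<subseteq> G \<Longrightarrow> is_matching M \<Longrightarrow> card M + card (M - P) \<le> k"
  shows "expected_alg A G \<le> k -
    (\<Sum>S | S \<subseteq> G \<and> card S = m. expected_alg A S - real (card (S \<inter> P))) / (card G choose m)"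
proof -
  let ?N = "card G"
  let ?X = "\<Sum>S | S \<subseteq> G \<and> card S = m. expected_alg A S - real (card (S \<inter> P))"
  have "fact ?N * expected_alg A G \<le> fact ?N * k - fact (?N - m) * fact m * ?X"
    using sum_expected_run_size_le[OF assms] assms(1) by (simp add: expected_alg_eq_sum)
  moreover have "(fact ?N :: real) = fact m * fact (?N - m) * (?N choose m)"
    using binomial_fact_lemma[OF assms(2)] by (metis of_nat_fact of_nat_mult)
  ultimately have "fact m * fact (?N - m) * (real (?N choose m) * expected_alg A G + ?X)
      \<le> fact m * fact (?N - m) * (real (?N choose m) * real k)"
    by (simp add: algebra_simps)
  then have "real (?N choose m) * expected_alg A G + ?X \<le> real (?N choose m) * real k"
    by (rule mult_left_le_imp_le) simp
  moreover have "0 < real (?N choose m)"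
    using assms(2) by simp
  ultimately show ?thesis
    by (simp add: field_simps)
qed

lemma expected_alg_le_subset_avg:
  assumes "finite G" "0 \<le> p" "p \<le> 1"
    and bound: "\<And>M. M \<subseteq> G \<Longrightarrow> is_matching M \<Longrightarrow> card M + card (M - P) \<le> k"
  shows "expected_alg A G \<le> k - subset_avg p G (\<lambda>S. expected_alg A S - real (card (S \<inter> P)))"
proof -
  let ?N = "card G"
  define X where "X m = (\<Sum>S | S \<subseteq> G \<and> card S = m. expected_alg A S - real (card (S \<inter> P)))" for m
  define w where "w m = real (?N choose m) * p ^ m * (1 - p) ^ (?N - m)" for m
  have w_sum: "(\<Sum>m\<le>?N. w m) = 1"
    using binomial_ring[of p "1 - p" ?N] by (simp add: w_def)
  have "expected_alg A G = (\<Sum>m\<le>?N. w m * expected_alg A G)"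
    by (simp add: sum_distrib_right[symmetric] w_sum)
  also have "\<dots> \<le> (\<Sum>m\<le>?N. w m * (k - X m / (?N choose m)))"
    using assms(2,3) expected_alg_le_prefix_avg[OF assms(1) _ bound]
    by (intro sum_mono mult_left_mono) (auto simp: w_def X_def)
  also have "\<dots> = k - (\<Sum>m\<le>?N. p ^ m * (1 - p) ^ (?N - m) * X m)"
    by (simp add: right_diff_distrib sum_subtractf sum_distrib_right[symmetric] w_sum)
      (simp add: w_def mult.assoc)
  also have "\<dots> = k - subset_avg p G (\<lambda>S. expected_alg A S - real (card (S \<inter> P)))"
    using assms(1) by (simp add: subset_avg_by_card X_def)
  finally show ?thesis .
qed

section \<open>The hard instance\<close>

definition core :: "nat \<Rightarrow> edge set" where
  "core n = {..<n} \<times> {..<n}"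

definition pendant_left :: "nat \<Rightarrow> edge set" where
  "pendant_left n = (\<lambda>i. (i, n + i)) ` {..<n}"

definition pendant_right :: "nat \<Rightarrow> edge set" where
  "pendant_right n = (\<lambda>i. (n + i, i)) ` {..<n}"

definition pendant :: "nat \<Rightarrow> edge set" where
  "pendant n = pendant_left n \<union> pendant_right n"

definition hard_graph :: "nat \<Rightarrow> edge set" where
  "hard_graph n = core n \<union> pendant n"

lemma finite_hard_graph [simp]: "finite (hard_graph n)"
  by (simp add: hard_graph_def core_def pendant_def pendant_left_def pendant_right_def)

lemma card_pendant: "card (pendant n) = 2 * n"
proof -
  have "card (pendant_left n) = n" "card (pendant_right n) = n"
    unfolding pendant_left_def pendant_right_def by (simp_all add: card_image inj_on_def)
  moreover have "pendant_left n \<inter> pendant_right n = {}"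
    by (auto simp: pendant_left_def pendant_right_def)
  ultimately show ?thesis
    unfolding pendant_def by (simp add: card_Un_disjoint pendant_left_def pendant_right_def)
qed

lemma opt_hard_graph_ge: "2 * n \<le> opt (hard_graph n)"
proof -
  have "is_matching (pendant n)"
    by (auto simp: is_matching_def pendant_def pendant_left_def pendant_right_def)
  then show ?thesis
    using card_le_opt[OF finite_hard_graph, of "pendant n" n]
    by (simp add: hard_graph_def card_pendant)
qed

text \<open>Left core vertices are covered only by core or left pendant edges, right core
  vertices only by core or right pendant edges.\<close>
lemma card_matching_hard_graph:
  assumes M: "M \<subseteq> hard_graph n" "is_matching M"
  shows "card M + card (M - pendant n) \<le> 2 * n"
proof -
  have "finite M" using M(1) finite_hard_graph by (rule finite_subset)
  have inj: "inj_on fst M" "inj_on snd M"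
    using M(2) unfolding is_matching_def inj_on_def by blast+
  have "card (M - pendant_right n) = card (fst ` (M - pendant_right n))"
    using inj(1) by (simp add: card_image inj_on_diff)
  also have "\<dots> \<le> card {..<n}"
    using M(1) by (intro card_mono)
      (auto simp: hard_graph_def core_def pendant_def pendant_left_def pendant_right_def)
  finally have left: "card (M - pendant_right n) \<le> n" by simp
  have "card (M - pendant_left n) = card (snd ` (M - pendant_left n))"
    using inj(2) by (simp add: card_image inj_on_diff)
  also have "\<dots> \<le> card {..<n}"
    using M(1) by (intro card_mono)
      (auto simp: hard_graph_def core_def pendant_def pendant_left_def pendant_right_def)
  finally have right: "card (M - pendant_left n) \<le> n" by simp
  have "card M = card (M - pendant_right n) + card (M \<inter> pendant_right n)"
    using card_Int_Diff[OF \<open>finite M\<close>, of "pendant_right n"] by simp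
  moreover have "card (M - pendant_left n) = card (M - pendant n) + card (M \<inter> pendant_right n)"
  proof -
    have "M - pendant_left n = (M - pendant n) \<union> (M \<inter> pendant_right n)"
      "(M - pendant n) \<inter> (M \<inter> pendant_right n) = {}"
      using M(1) by (auto simp: pendant_def pendant_left_def pendant_right_def)
    then show ?thesis
      using \<open>finite M\<close> by (simp add: card_Un_disjoint)
  qed
  ultimately show ?thesis
    using left right by linarith
qed

lemma subset_avg_card_pendant:
  "subset_avg p (hard_graph n) (\<lambda>S. real (card (S \<inter> pendant n))) = 2 * real n * p"
proof -
  have "real (card (S \<inter> pendant n)) = (\<Sum>e\<in>pendant n. if e \<in> S then 1 else 0)" for S
    by (simp add: sum.If_cases Int_commute pendant_def pendant_left_def pendant_right_def)
  then have "subset_avg p (hard_graph n) (\<lambda>S. real (card (S \<inter> pendant n)))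
      = (\<Sum>e\<in>pendant n. subset_avg p (hard_graph n) (\<lambda>S. if e \<in> S then 1 else 0))"
    by (simp add: subset_avg_sum)
  also have "\<dots> = (\<Sum>e\<in>pendant n. p)"
    by (intro sum.cong refl subset_avg_indicator finite_hard_graph) (simp add: hard_graph_def)
  finally show ?thesis
    by (simp add: card_pendant)
qed

lemma subset_avg_opt_hard_graph_ge:
  assumes "0 < p" "p \<le> 1"
  shows "real n - 1 / p \<le> subset_avg p (hard_graph n) (\<lambda>S. real (opt S))"
proof -
  have "real n - 1 / p \<le> greedy_bound p n n"
    using assms by (rule greedy_bound_ge)
  also have "\<dots> \<le> subset_avg p (core n) (\<lambda>S. real (opt S))"
    using greedy_bound_le_subset_avg_opt[of p "{..<n}" "{..<n}"] assms by (simp add: core_def)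
  also have "\<dots> = subset_avg p (hard_graph n) (\<lambda>S. real (opt (S \<inter> core n)))"
    using subset_avg_restrict[OF finite_hard_graph[of n], of "core n" p "\<lambda>S. real (opt S)"]
    by (simp add: hard_graph_def)
  also have "\<dots> \<le> subset_avg p (hard_graph n) (\<lambda>S. real (opt S))"
  proof (rule subset_avg_mono)
    fix S assume "S \<subseteq> hard_graph n"
    then have "finite S" using finite_hard_graph by (rule finite_subset)
    then show "real (opt (S \<inter> core n)) \<le> real (opt S)"
      by (simp add: opt_mono)
  qed (use assms in auto)
  finally show ?thesis .
qed

lemma expected_alg_hard_graph_le:
  assumes "0 < p" "p \<le> 1" "0 \<le> c"
    and competitive: "\<And>S. S \<subseteq> hard_graph n \<Longrightarrow> c * real (opt S) \<le> expected_alg A S"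
  shows "expected_alg A (hard_graph n) \<le> 2 * real n - c * (real n - 1 / p) + 2 * real n * p"
proof -
  have "c * (n - 1 / p) \<le> c * subset_avg p (hard_graph n) (\<lambda>S. real (opt S))"
    using subset_avg_opt_hard_graph_ge[OF assms(1,2)] assms(3) by (rule mult_left_mono)
  also have "\<dots> \<le> subset_avg p (hard_graph n) (expected_alg A)"
    unfolding subset_avg_cmult[symmetric] using assms(1,2) competitive
    by (intro subset_avg_mono) auto
  finally have "c * (n - 1 / p) \<le> subset_avg p (hard_graph n) (expected_alg A)" .
  moreover have "expected_alg A (hard_graph n) \<le> real (2 * n)
      - subset_avg p (hard_graph n) (\<lambda>S. expected_alg A S - real (card (S \<inter> pendant n)))"
    using assms(1,2) card_matching_hard_graph
    by (intro expected_alg_le_subset_avg finite_hard_graph) auto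
  ultimately show ?thesis
    by (simp add: subset_avg_diff subset_avg_card_pendant)
qed

lemma competitive_ratio_mult_opt_le:
  assumes "finite S"
  shows "competitive_ratio A * real (opt S) \<le> expected_alg A S"
proof (cases "S = {}")
  case False
  have "0 \<le> expected_alg A E" for E
    unfolding expected_alg_def by (rule integral_nonneg_AE) simp
  then have "competitive_ratio A \<le> expected_alg A S / real (opt S)"
    unfolding competitive_ratio_def using assms False
    by (intro cINF_lower bdd_belowI2[where m = 0]) auto
  moreover have "0 < real (opt S)"
    using one_le_opt[OF assms] False by fastforce
  ultimately show ?thesis
    by (simp add: pos_le_divide_eq)
qed (simp add: expected_alg_def integral_nonneg_AE)

lemma le_two_thirds_of_hard_graph_bound:
  fixes c \<epsilon> :: real
  assumes "0 < \<epsilon>" "0 \<le> c"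
    and bound: "\<And>(n::nat) p. 0 < p \<Longrightarrow> p \<le> 1 \<Longrightarrow>
      c * (2 * real n) \<le> 2 * real n - c * (real n - 1 / p) + 2 * real n * p"
  shows "c \<le> 2 / 3 + \<epsilon>"
proof (rule ccontr)
  assume contra: "\<not> c \<le> 2 / 3 + \<epsilon>"
  define e where "e = min \<epsilon> 1"
  define n where "n = nat \<lceil>4 / e\<^sup>2\<rceil> + 1"
  define x where "x = real n * (e / 2)"
  have e: "0 < e" "e \<le> 1" "c > 2 / 3 + e"
    using assms(1) contra by (auto simp: e_def)
  have "4 / e\<^sup>2 \<le> real n"
    unfolding n_def by linarith
  then have ex: "2 \<le> e * x"
    using e by (simp add: x_def divide_le_eq power2_eq_square algebra_simps)
  have "e / 2 * (c * (2 * real n))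
      \<le> e / 2 * (2 * real n - c * (real n - 1 / (e / 2)) + 2 * real n * (e / 2))"
    using bound[of "e / 2" n] e by (intro mult_left_mono) auto
  then have "c * (3 * x - 1) \<le> x * (2 + e)"
    using e by (simp add: x_def algebra_simps)
  moreover have "e * x \<le> x"
    using e by (simp add: x_def mult_left_le_one_le)
  then have "(2 / 3 + e) * (3 * x - 1) < c * (3 * x - 1)"
    using e ex by (intro mult_strict_right_mono) auto
  ultimately have "(2 / 3 + e) * (3 * x - 1) < x * (2 + e)"
    by linarith
  moreover have "(2 / 3 + e) * (3 * x - 1) = 2 * x + 3 * (e * x) - 2 / 3 - e"
    "x * (2 + e) = 2 * x + e * x"
    by (simp_all add: field_simps)
  ultimately show False
    using e ex by linarith
qed

theorem theorem7:
  fixes \<epsilon> :: real and A :: online_alg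
  assumes "\<epsilon> > 0"
    and "\<And>h e. 0 \<le> A h e \<and> A h e \<le> 1"
  shows "competitive_ratio A \<le> 2/3 + \<epsilon>"
proof (cases "competitive_ratio A < 0")
  case True
  with assms(1) show ?thesis by linarith
next
  case False
  let ?c = "competitive_ratio A"
  show ?thesis
  proof (rule le_two_thirds_of_hard_graph_bound[OF assms(1)])
    show "0 \<le> ?c" using False by simp
    fix n :: nat and p :: real
    assume p: "0 < p" "p \<le> 1"
    have "?c * (2 * real n) \<le> ?c * opt (hard_graph n)"
      using opt_hard_graph_ge[of n] False by (intro mult_left_mono) auto
    also have "\<dots> \<le> expected_alg A (hard_graph n)"
      by (rule competitive_ratio_mult_opt_le) simp
    also have "\<dots> \<le> 2 * real n - ?c * (real n - 1 / p) + 2 * real n * p"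
      using p False
      by (intro expected_alg_hard_graph_le competitive_ratio_mult_opt_le
          finite_subset[OF _ finite_hard_graph]) auto
    finally show "?c * (2 * real n) \<le> 2 * real n - ?c * (real n - 1 / p) + 2 * real n * p" .
  qed
qed

end
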